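(* Let $L$ be a linear continuum with endpoints, let $(f_i:i\in I)$ be an indiscernible sequence of single elements of $M_L$ (indexed by a linear order $I$), and let $(a_i:i\in I)\in\mathrm{im}(f_i:i\in I)$. Then $(a_i:i\in I)$ is either nondecreasing or nonincreasing in $i$.
   Context: A linear continuum is a dense linear order with the least upper bound property; with endpoints means it has a least and greatest element. $M_L$ is the set of functions $f:L\to[0,1]$ that are nondecreasing, continuous in the order topology, with $\inf f=0$ and $\sup f=1$, with the sup metric, regarded as a metric structure in the language of binary predicates $\varphi_\alpha$ ($\alpha\in\mathbb{Q}\cap[0,1]$), where $\varphi_\alpha(f,g)=f(t)$ for any $t\in L$ with $f(t)+g(t)=\alpha$ (independent of the choice of $t$). $\mathrm{im}(f_i:i\in I)=\{(f_i(t))_{i\in I}:t\in L\}$. A sequence is indiscernible if every formula takes the same value on all increasing tuples from it. *)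

theory Defs
  imports "HOL-Analysis.Analysis"
begin

definition M_L :: "('l::{complete_linorder, linorder_topology} \<Rightarrow> real) set" where
  "M_L = {f. (\<forall>t. 0 \<le> f t \<and> f t \<le> 1) \<and> mono f \<and> continuous_on UNIV f
            \<and> (INF t. f t) = 0 \<and> (SUP t. f t) = 1}"

definition M_L_dist :: "('l \<Rightarrow> real) \<Rightarrow> ('l \<Rightarrow> real) \<Rightarrow> real" where
  "M_L_dist f g = (SUP t. \<bar>f t - g t\<bar>)"

definition phi :: "rat \<Rightarrow> ('l \<Rightarrow> real) \<Rightarrow> ('l \<Rightarrow> real) \<Rightarrow> real" where
  "phi \<alpha> f g = f (SOME t. f t + g t = of_rat \<alpha>)"

text \<open>Continuous-logic formulas in the language {d} \<union> {phi_alpha}, with the standard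
  (uniformly dense) set of connectives 0, 1-x, x/2, x -. y and the quantifiers sup, inf.
  Variables are de Bruijn indices; quantifiers bind index 0.\<close>
datatype cform =
    CDist nat nat
  | CPhi rat nat nat
  | CZero
  | CNeg cform
  | CHalf cform
  | CMinus cform cform
  | CSup cform
  | CInf cform

fun fv :: "cform \<Rightarrow> nat set" where
  "fv (CDist x y) = {x, y}"
| "fv (CPhi a x y) = {x, y}"
| "fv CZero = {}"
| "fv (CNeg p) = fv p"
| "fv (CHalf p) = fv p"
| "fv (CMinus p q) = fv p \<union> fv q"
| "fv (CSup p) = {k. Suc k \<in> fv p}"
| "fv (CInf p) = {k. Suc k \<in> fv p}"

definition scons :: "'a \<Rightarrow> (nat \<Rightarrow> 'a) \<Rightarrow> nat \<Rightarrow> 'a" where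
  "scons g \<rho> k = (case k of 0 \<Rightarrow> g | Suc j \<Rightarrow> \<rho> j)"

text \<open>Predicate symbols phi_alpha exist only for alpha in Q \<inter> [0,1]; other indices are
  interpreted as the constant 0 (harmless).\<close>
fun ceval :: "cform \<Rightarrow> (nat \<Rightarrow> ('l::{complete_linorder, linorder_topology} \<Rightarrow> real)) \<Rightarrow> real" where
  "ceval (CDist x y) \<rho> = M_L_dist (\<rho> x) (\<rho> y)"
| "ceval (CPhi a x y) \<rho> = (if 0 \<le> a \<and> a \<le> 1 then phi a (\<rho> x) (\<rho> y) else 0)"
| "ceval CZero \<rho> = 0"
| "ceval (CNeg p) \<rho> = 1 - ceval p \<rho>"
| "ceval (CHalf p) \<rho> = ceval p \<rho> / 2"
| "ceval (CMinus p q) \<rho> = max (ceval p \<rho> - ceval q \<rho>) 0"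
| "ceval (CSup p) \<rho> = (SUP g\<in>M_L. ceval p (scons g \<rho>))"
| "ceval (CInf p) \<rho> = (INF g\<in>M_L. ceval p (scons g \<rho>))"

definition tuple_env :: "('i \<Rightarrow> ('l \<Rightarrow> real)) \<Rightarrow> 'i list \<Rightarrow> nat \<Rightarrow> ('l \<Rightarrow> real)" where
  "tuple_env f xs k = (if k < length xs then f (xs ! k) else undefined)"

definition indiscernible ::
  "('i::linorder \<Rightarrow> ('l::{complete_linorder, linorder_topology} \<Rightarrow> real)) \<Rightarrow> bool" where
  "indiscernible f \<longleftrightarrow>
     (\<forall>\<phi> xs ys. sorted_wrt (<) xs \<and> sorted_wrt (<) ys \<and> length xs = length ys
        \<and> fv \<phi> \<subseteq> {..<length xs}
        \<longrightarrow> ceval \<phi> (tuple_env f xs) = ceval \<phi> (tuple_env f ys))"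

definition im :: "('i \<Rightarrow> ('l \<Rightarrow> real)) \<Rightarrow> ('i \<Rightarrow> real) set" where
  "im f = {(\<lambda>i. f i t) | t. True}"

end

theory Submission
  imports Defs
begin

text \<open>For nondecreasing F and G, \<open>phi \<alpha> F G\<close> is the value of F at any point where
  F + G = \<alpha>. A formula may therefore quantify over an auxiliary g \<in> M_L and read off the values of
  x_p, x_q and g at points s1, s2 where x_p + g = \<alpha> and x_q + g = \<beta>; comparing g s1 with g s2
  orders the two points, and \<open>phi c x x = c / 2\<close> supplies the constant c. Ranging over rational
  \<alpha>, \<beta>, such formulas express that x_p s < c < x_q s for some s.
  If \<open>a = (\<lambda>i. f i t)\<close> had a peak, f_i t, f_k t < c < f_j t with i < j < k, this would hold for the
  pair (f_i, f_j) but fail for (f_j, f_k), both being nondecreasing; valleys are symmetric.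
  Indiscernibility rules out both, and a sequence without peaks and valleys is monotone.\<close>

lemma M_L_D:
  fixes F :: "'l::{complete_linorder, linorder_topology} \<Rightarrow> real"
  assumes "F \<in> M_L"
  shows "mono F" "continuous_on UNIV F" "0 \<le> F t" "F t \<le> 1" "F bot = 0" "F top = 1"
proof -
  show mono: "mono F" and "continuous_on UNIV F" "0 \<le> F t" "F t \<le> 1"
    using assms by (auto simp: M_L_def)
  have "(INF t. F t) = F bot"
    by (rule cInf_eq_minimum) (auto intro: monoD[OF mono])
  then show "F bot = 0" using assms by (simp add: M_L_def)
  have "(SUP t. F t) = F top"
    by (rule cSup_eq_maximum) (auto intro: monoD[OF mono])
  then show "F top = 1" using assms by (simp add: M_L_def)
qed

lemma IVT_complete_linorder:
  fixes F :: "'a::{complete_linorder, dense_linorder, linorder_topology} \<Rightarrow> 'b::linorder_topology"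
  assumes cont: "continuous_on UNIV F" and "F bot \<le> y" "y \<le> F top"
  shows "\<exists>t. F t = y"
proof -
  define t where "t = Sup {s. F s \<le> y}"
  have open_vimage: "open (F -` B)" if "open B" for B
    using cont that by (simp add: continuous_on_open_vimage[of UNIV])
  have "F t \<le> y"
  proof (rule ccontr)
    assume "\<not> F t \<le> y"
    then have "y < F t" by simp
    with \<open>F bot \<le> y\<close> have "bot < t"
      by (metis bot.not_eq_extremum leD)
    then obtain b where "b < t" and b: "{b<..t} \<subseteq> F -` {y<..}"
      using open_left[OF open_vimage[OF open_greaterThan]] \<open>y < F t\<close> by force
    then obtain s where "F s \<le> y" "b < s"
      unfolding t_def by (auto simp: less_Sup_iff)
    moreover from \<open>F s \<le> y\<close> have "s \<le> t"
      unfolding t_def by (simp add: Sup_upper)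
    ultimately show False using b by force
  qed
  moreover have "y \<le> F t"
  proof (rule ccontr)
    assume "\<not> y \<le> F t"
    then have "F t < y" by simp
    with \<open>y \<le> F top\<close> have "t < top"
      by (metis top.not_eq_extremum leD)
    then obtain b where "t < b" and b: "{t..<b} \<subseteq> F -` {..<y}"
      using open_right[OF open_vimage[OF open_lessThan]] \<open>F t < y\<close> by force
    then obtain z where "t < z" "z < b"
      using dense by blast
    with b have "F z \<le> y"
      using less_imp_le by fastforce
    then have "z \<le> t"
      unfolding t_def by (simp add: Sup_upper)
    with \<open>t < z\<close> show False by simp
  qed
  ultimately show ?thesis by (intro exI[of _ t]) simp
qed

lemma clamped_rescaling_in_M_L:
  fixes G :: "'l::{complete_linorder, linorder_topology} \<Rightarrow> real"
  assumes G: "G \<in> M_L" and "0 \<le> b" "0 < d" "d \<le> 1 - b"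
  shows "(\<lambda>x. max 0 (min 1 ((G x - b) / d))) \<in> M_L"
proof -
  define g where "g x = max 0 (min 1 ((G x - b) / d))" for x
  have "mono g"
  proof (rule monoI)
    fix x y :: 'l
    assume "x \<le> y"
    then have "(G x - b) / d \<le> (G y - b) / d"
      using monoD[OF M_L_D(1)[OF G]] \<open>0 < d\<close> by (simp add: divide_right_mono)
    then show "g x \<le> g y" unfolding g_def by linarith
  qed
  moreover have "0 \<le> b / d" "1 \<le> (1 - b) / d"
    using assms(2-4) by simp_all
  then have "g bot = 0" "g top = 1"
    using M_L_D(5,6)[OF G] by (simp_all add: g_def)
  moreover have "continuous_on UNIV g"
    unfolding g_def using \<open>0 < d\<close> by (intro continuous_intros M_L_D(2)[OF G]) auto
  moreover have "0 \<le> g x" "g x \<le> 1" for x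
    by (simp_all add: g_def)
  ultimately have "g \<in> M_L"
    unfolding M_L_def by (auto intro!: cInf_eq_minimum cSup_eq_maximum dest: monoD)
  then show ?thesis by (simp add: g_def[abs_def])
qed

lemma phi_eq:
  fixes F G :: "'l::linorder \<Rightarrow> real"
  assumes "mono F" "mono G" and sum: "F s + G s = of_rat \<alpha>"
  shows "phi \<alpha> F G = F s"
proof -
  define s' where "s' = (SOME t. F t + G t = of_rat \<alpha>)"
  have sum': "F s' + G s' = F s + G s"
    unfolding s'_def using someI[of "\<lambda>t. F t + G t = of_rat \<alpha>", OF sum] sum by simp
  consider "s' \<le> s" | "s \<le> s'" by (rule le_cases)
  then have "F s' = F s"
    by cases (use sum' monoD[OF \<open>mono F\<close>] monoD[OF \<open>mono G\<close>] in \<open>smt (verit)\<close>)+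
  then show ?thesis by (simp add: phi_def s'_def)
qed

lemma phi_swap_def: "phi \<alpha> G F = G (SOME t. F t + G t = of_rat \<alpha>)"
  unfolding phi_def by (simp add: add.commute)

lemma phi_diag:
  fixes F :: "'l::{complete_linorder, dense_linorder, linorder_topology} \<Rightarrow> real"
  assumes "F \<in> M_L" "0 \<le> c" "c \<le> 1"
  shows "phi c F F = of_rat c / 2"
proof -
  have "0 \<le> (of_rat c :: real)" "(of_rat c :: real) \<le> 1"
    using assms(2,3) by (simp_all add: zero_le_of_rat_iff of_rat_le_1_iff)
  then have "0 \<le> (of_rat c :: real) / 2" "(of_rat c :: real) / 2 \<le> 1" by linarith+
  then obtain t where "F t = of_rat c / 2"
    using IVT_complete_linorder[OF M_L_D(2)[OF assms(1)]] M_L_D(5,6)[OF assms(1)] by metis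
  then show ?thesis
    using phi_eq[OF M_L_D(1)[OF assms(1)] M_L_D(1)[OF assms(1)], of t c] by simp
qed

lemma phi_nonneg:
  assumes "F \<in> M_L"
  shows "0 \<le> phi \<alpha> F G"
  using assms by (auto simp: phi_def M_L_def)

definition level_between :: "('l \<Rightarrow> real) \<Rightarrow> ('l \<Rightarrow> real) \<Rightarrow> real \<Rightarrow> bool" where
  "level_between F G y \<longleftrightarrow> (\<exists>s. F s < y \<and> y < G s)"

lemma not_level_between:
  fixes F G :: "'l::linorder \<Rightarrow> real"
  assumes "mono F" "mono G" "y < F t" "G t < y"
  shows "\<not> level_between F G y"
  unfolding level_between_def
  by (metis assms le_cases monoD not_less order.strict_trans2 order.strict_trans1)

definition level_witness ::
  "rat \<Rightarrow> rat \<Rightarrow> ('l \<Rightarrow> real) \<Rightarrow> ('l \<Rightarrow> real) \<Rightarrow> real \<Rightarrow> ('l \<Rightarrow> real) \<Rightarrow> bool" where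
  "level_witness \<alpha> \<beta> F G y g \<longleftrightarrow>
     phi \<alpha> F g < y \<and> y < phi \<beta> G g \<and> phi \<beta> g G < phi \<alpha> g F"

lemma level_between_if_level_witness:
  fixes F G g :: "'l::linorder \<Rightarrow> real"
  assumes "mono G" "mono g" "level_witness \<alpha> \<beta> F G y g"
  shows "level_between F G y"
proof -
  define s\<^sub>1 where "s\<^sub>1 = (SOME t. F t + g t = of_rat \<alpha>)"
  define s\<^sub>2 where "s\<^sub>2 = (SOME t. G t + g t = of_rat \<beta>)"
  have "F s\<^sub>1 < y" "y < G s\<^sub>2" "g s\<^sub>2 < g s\<^sub>1"
    using assms(3)
    unfolding level_witness_def phi_swap_def[of \<alpha> g F] phi_swap_def[of \<beta> g G]
    unfolding phi_def s\<^sub>1_def s\<^sub>2_def by simp_all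
  moreover from \<open>g s\<^sub>2 < g s\<^sub>1\<close> have "s\<^sub>2 \<le> s\<^sub>1"
    using monoD[OF \<open>mono g\<close>, of s\<^sub>1 s\<^sub>2] by force
  then have "G s\<^sub>2 \<le> G s\<^sub>1"
    using monoD[OF \<open>mono G\<close>] by blast
  ultimately show ?thesis
    unfolding level_between_def by (intro exI[of _ s\<^sub>1]) simp
qed

lemma level_witness_if_level_between:
  fixes F G :: "'l::{complete_linorder, dense_linorder, linorder_topology} \<Rightarrow> real"
  assumes F: "F \<in> M_L" and G: "G \<in> M_L" and "level_between F G y"
  shows "\<exists>\<alpha> \<beta>. 0 \<le> \<alpha> \<and> \<alpha> \<le> 1 \<and> 0 \<le> \<beta> \<and> \<beta> \<le> 1 \<and> (\<exists>g\<in>M_L. level_witness \<alpha> \<beta> F G y g)"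
proof -
  obtain t where t: "F t < y" "y < G t"
    using assms(3) by (auto simp: level_between_def)
  obtain \<alpha> :: rat where \<alpha>: "F t < of_rat \<alpha>" "of_rat \<alpha> < y"
    using of_rat_dense[OF t(1)] by blast
  obtain \<beta> :: rat where \<beta>: "y < of_rat \<beta>" "of_rat \<beta> < G t"
    using of_rat_dense[OF t(2)] by blast
  have "0 \<le> F t" "G t \<le> 1"
    using M_L_D(3,4) F G by blast+
  with \<alpha> \<beta> t have "0 < (of_rat \<alpha> :: real)" "(of_rat \<alpha> :: real) < 1"
    "0 < (of_rat \<beta> :: real)" "(of_rat \<beta> :: real) < 1"
    by linarith+
  then have \<alpha>\<beta>_range: "0 \<le> \<alpha>" "\<alpha> \<le> 1" "0 \<le> \<beta>" "\<beta> \<le> 1"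
    by (simp_all add: zero_less_of_rat_iff)
  \<comment> \<open>g vanishes where G = \<beta> and equals 1 at t, so F + g reaches \<alpha> before t.\<close>
  define g where "g x = max 0 (min 1 ((G x - of_rat \<beta>) / (G t - of_rat \<beta>)))" for x
  have g: "g \<in> M_L"
    unfolding g_def[abs_def] using G \<beta> \<open>0 < of_rat \<beta>\<close> \<open>G t \<le> 1\<close>
    by (intro clamped_rescaling_in_M_L) auto
  have mono: "mono F" "mono G" "mono g"
    using M_L_D(1) F G g by blast+
  have "g t = 1"
    using \<beta> by (simp add: g_def)
  obtain s\<^sub>2 where s\<^sub>2: "G s\<^sub>2 = of_rat \<beta>"
    using IVT_complete_linorder[OF M_L_D(2)[OF G], of "of_rat \<beta>"] \<open>0 < of_rat \<beta>\<close> \<open>of_rat \<beta> < 1\<close>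
    by (auto simp: M_L_D(5,6)[OF G])
  then have "g s\<^sub>2 = 0"
    by (simp add: g_def)
  have "continuous_on UNIV (\<lambda>x. F x + g x)"
    by (intro continuous_intros M_L_D(2) F g)
  then obtain s\<^sub>1 where s\<^sub>1: "F s\<^sub>1 + g s\<^sub>1 = of_rat \<alpha>"
    using IVT_complete_linorder[of "\<lambda>x. F x + g x" "of_rat \<alpha>"] \<open>0 < of_rat \<alpha>\<close> \<open>of_rat \<alpha> < 1\<close>
    by (auto simp: M_L_D(5,6)[OF F] M_L_D(5,6)[OF g])
  have "s\<^sub>1 \<le> t"
  proof (rule ccontr)
    assume "\<not> s\<^sub>1 \<le> t"
    then have "F t + g t \<le> F s\<^sub>1 + g s\<^sub>1"
      using monoD[OF mono(1)] monoD[OF mono(3)] by (simp add: add_mono)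
    then show False
      using s\<^sub>1 \<open>g t = 1\<close> \<open>0 \<le> F t\<close> \<open>of_rat \<alpha> < 1\<close> by linarith
  qed
  then have "F s\<^sub>1 \<le> F t"
    using monoD[OF mono(1)] by blast
  have "phi \<alpha> F g = F s\<^sub>1" "phi \<alpha> g F = g s\<^sub>1"
    using phi_eq[OF mono(1,3) s\<^sub>1] phi_eq[OF mono(3,1), of s\<^sub>1 \<alpha>] s\<^sub>1 by (simp_all add: add.commute)
  moreover have "phi \<beta> G g = G s\<^sub>2" "phi \<beta> g G = g s\<^sub>2"
    using phi_eq[OF mono(2,3), of s\<^sub>2 \<beta>] phi_eq[OF mono(3,2), of s\<^sub>2 \<beta>] s\<^sub>2 \<open>g s\<^sub>2 = 0\<close>
    by simp_all
  ultimately have "level_witness \<alpha> \<beta> F G y g"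
    unfolding level_witness_def using s\<^sub>1 s\<^sub>2 \<open>g s\<^sub>2 = 0\<close> \<open>F s\<^sub>1 \<le> F t\<close> t \<alpha> \<beta> by linarith
  with \<alpha>\<beta>_range g show ?thesis by blast
qed

definition cmin :: "cform \<Rightarrow> cform \<Rightarrow> cform" where
  "cmin \<phi> \<psi> = CMinus \<phi> (CMinus \<phi> \<psi>)"

lemma ceval_cmin:
  assumes "0 \<le> ceval \<phi> \<rho>" "0 \<le> ceval \<psi> \<rho>"
  shows "ceval (cmin \<phi> \<psi>) \<rho> = min (ceval \<phi> \<rho>) (ceval \<psi> \<rho>)"
  using assms by (simp add: cmin_def)

text \<open>Under \<open>CSup\<close> index 0 is the bound g and \<open>Suc p\<close> is x_p; \<open>CPhi c x x\<close> evaluates to c / 2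
  (\<open>phi_diag\<close>), which is how the formula compares with the constant c.\<close>
definition level_between_formula :: "rat \<Rightarrow> rat \<Rightarrow> rat \<Rightarrow> nat \<Rightarrow> nat \<Rightarrow> cform" where
  "level_between_formula c \<alpha> \<beta> p q = CSup (cmin
      (CMinus (CPhi c (Suc p) (Suc p)) (CHalf (CPhi \<alpha> (Suc p) 0)))
      (cmin (CMinus (CHalf (CPhi \<beta> (Suc q) 0)) (CPhi c (Suc q) (Suc q)))
            (CMinus (CPhi \<alpha> 0 (Suc p)) (CPhi \<beta> 0 (Suc q)))))"

lemma fv_level_between_formula: "fv (level_between_formula c \<alpha> \<beta> p q) \<subseteq> {p, q}"
  by (auto simp: level_between_formula_def cmin_def)

lemma level_between_formula_pos_iff:
  fixes \<rho> :: "nat \<Rightarrow> ('l::{complete_linorder, dense_linorder, linorder_topology} \<Rightarrow> real)"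
  assumes "\<rho> p \<in> M_L" "\<rho> q \<in> M_L" "0 \<le> c" "c \<le> 1" "0 \<le> \<alpha>" "\<alpha> \<le> 1" "0 \<le> \<beta>" "\<beta> \<le> 1"
  shows "0 < ceval (level_between_formula c \<alpha> \<beta> p q) \<rho> \<longleftrightarrow>
    (\<exists>g\<in>M_L. level_witness \<alpha> \<beta> (\<rho> p) (\<rho> q) (of_rat c) g)"
proof -
  define inner where "inner g =
    min (max (of_rat c / 2 - phi \<alpha> (\<rho> p) g / 2) 0)
      (min (max (phi \<beta> (\<rho> q) g / 2 - of_rat c / 2) 0) (max (phi \<alpha> g (\<rho> p) - phi \<beta> g (\<rho> q)) 0))"
    for g :: "'l \<Rightarrow> real"
  have "ceval (level_between_formula c \<alpha> \<beta> p q) \<rho> = (SUP g\<in>M_L. inner g)"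
    using assms by (simp add: level_between_formula_def inner_def ceval_cmin scons_def phi_diag)
  moreover have "bdd_above (inner ` M_L)"
  proof (rule bdd_aboveI2)
    fix g :: "'l \<Rightarrow> real"
    have "0 \<le> phi \<alpha> (\<rho> p) g" "(of_rat c :: real) \<le> 1"
      using phi_nonneg[OF assms(1)] assms(4) by simp_all
    then show "inner g \<le> 1" unfolding inner_def by linarith
  qed
  moreover have "0 < inner g \<longleftrightarrow> level_witness \<alpha> \<beta> (\<rho> p) (\<rho> q) (of_rat c) g" for g
    by (auto simp: inner_def level_witness_def)
  ultimately show ?thesis
    using less_cSUP_iff[of M_L inner 0] assms(1) by auto
qed

lemma level_between_definable:
  fixes \<rho> :: "nat \<Rightarrow> ('l::{complete_linorder, dense_linorder, linorder_topology} \<Rightarrow> real)"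
  assumes "\<rho> p \<in> M_L" "\<rho> q \<in> M_L" "0 \<le> c" "c \<le> 1"
  shows "level_between (\<rho> p) (\<rho> q) (of_rat c) \<longleftrightarrow>
    (\<exists>\<alpha> \<beta>. 0 \<le> \<alpha> \<and> \<alpha> \<le> 1 \<and> 0 \<le> \<beta> \<and> \<beta> \<le> 1 \<and>
      0 < ceval (level_between_formula c \<alpha> \<beta> p q) \<rho>)"
  using level_witness_if_level_between[OF assms(1,2)] level_between_if_level_witness
    level_between_formula_pos_iff[OF assms] M_L_D(1) assms(2)
  by meson

lemma indiscernible_pairs:
  assumes "indiscernible f" "i < j" "i' < j'" "fv \<phi> \<subseteq> {0, 1}"
  shows "ceval \<phi> (tuple_env f [i, j]) = ceval \<phi> (tuple_env f [i', j'])"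
proof -
  have "sorted_wrt (<) [i, j]" "sorted_wrt (<) [i', j']" "fv \<phi> \<subseteq> {..<length [i, j]}"
    using assms(2-4) by auto
  then show ?thesis
    using assms(1) unfolding indiscernible_def by fastforce
qed

lemma indiscernible_level_between:
  fixes f :: "'i::linorder \<Rightarrow> ('l::{complete_linorder, dense_linorder, linorder_topology} \<Rightarrow> real)"
  assumes "indiscernible f" "\<forall>i. f i \<in> M_L" "i < j" "i' < j'"
    and "p < 2" "q < 2" "0 \<le> c" "c \<le> 1"
  shows "level_between (f ([i, j] ! p)) (f ([i, j] ! q)) (of_rat c) \<longleftrightarrow>
    level_between (f ([i', j'] ! p)) (f ([i', j'] ! q)) (of_rat c)"
proof -
  have env: "tuple_env f xs k = f (xs ! k)" if "k < 2" "length xs = 2" for xs k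
    using that by (simp add: tuple_env_def)
  have "fv (level_between_formula c \<alpha> \<beta> p q) \<subseteq> {0, 1}" for \<alpha> \<beta>
    using fv_level_between_formula \<open>p < 2\<close> \<open>q < 2\<close> by (fastforce simp: less_2_cases_iff)
  then show ?thesis
    using level_between_definable[of "tuple_env f [i, j]" p q c]
      level_between_definable[of "tuple_env f [i', j']" p q c]
      indiscernible_pairs[OF assms(1,3,4)] assms(2,5-8)
    by (simp add: env)
qed

lemma mono_or_antimono_if_no_peak_no_valley:
  fixes a :: "'i::linorder \<Rightarrow> 'a::linorder"
  assumes "\<And>i j k. i < j \<Longrightarrow> j < k \<Longrightarrow> \<not> (a i < a j \<and> a k < a j) \<and> \<not> (a j < a i \<and> a j < a k)"
  shows "mono a \<or> antimono a"
proof (rule ccontr)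
  assume "\<not> (mono a \<or> antimono a)"
  then obtain x y r s where "x < y" "a y < a x" "r < s" "a r < a s"
    unfolding mono_def antimono_def by (metis not_le order.not_eq_order_implies_strict order.refl)
  have after_fall: "a z \<le> a y" if "y < z" for z
    using assms[of x y z] that \<open>x < y\<close> \<open>a y < a x\<close> by force
  have before_fall: "a x \<le> a z" if "z < x" for z
    using assms[of z x y] that \<open>x < y\<close> \<open>a y < a x\<close> by force
  have after_rise: "a s \<le> a z" if "s < z" for z
    using assms[of r s z] that \<open>r < s\<close> \<open>a r < a s\<close> by force
  have before_rise: "a z \<le> a r" if "z < r" for z
    using assms[of z r s] that \<open>r < s\<close> \<open>a r < a s\<close> by force
  have "a s \<le> a y"
    using after_fall[of s] after_rise[of y] by (cases y s rule: linorder_cases) auto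
  also have "a y < a x" by fact
  also have "a x \<le> a r"
    using before_fall[of r] before_rise[of x] by (cases x r rule: linorder_cases) auto
  finally show False
    using \<open>a r < a s\<close> by simp
qed

lemma indiscernible_no_peak_no_valley:
  fixes f :: "'i::linorder \<Rightarrow> ('l::{complete_linorder, dense_linorder, linorder_topology} \<Rightarrow> real)"
  assumes indisc: "indiscernible f" and M: "\<forall>i. f i \<in> M_L" and "i < j" "j < k"
  shows "\<not> (f i t < f j t \<and> f k t < f j t)" "\<not> (f j t < f i t \<and> f j t < f k t)"
proof -
  have mono: "mono (f i)" for i
    using M_L_D(1) M by blast
  have unit: "0 \<le> c \<and> c \<le> 1" if "f i t < of_rat c" "of_rat c < f j t" for i j c
    using that M_L_D(3,4) M by (metis less_le_trans le_less_trans less_imp_le zero_le_of_rat_iff of_rat_le_1_iff)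
  show "\<not> (f i t < f j t \<and> f k t < f j t)"
  proof
    assume "f i t < f j t \<and> f k t < f j t"
    then obtain c :: rat where c: "max (f i t) (f k t) < of_rat c" "of_rat c < f j t"
      using of_rat_dense[of "max (f i t) (f k t)"] by auto
    then have "level_between (f i) (f j) (of_rat c)" "0 \<le> c \<and> c \<le> 1"
      using unit[of i c j] by (auto simp: level_between_def)
    moreover have "\<not> level_between (f j) (f k) (of_rat c)"
      using not_level_between[OF mono mono, of "of_rat c" j t k] c by simp
    ultimately show False
      using indiscernible_level_between[OF indisc M \<open>i < j\<close> \<open>j < k\<close>, of 0 1 c] by simp
  qed
  show "\<not> (f j t < f i t \<and> f j t < f k t)"
  proof
    assume "f j t < f i t \<and> f j t < f k t"
    then obtain c :: rat where c: "f j t < of_rat c" "of_rat c < min (f i t) (f k t)"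
      using of_rat_dense[of "f j t" "min (f i t) (f k t)"] by auto
    then have "level_between (f j) (f i) (of_rat c)" "0 \<le> c \<and> c \<le> 1"
      using unit[of j c i] by (auto simp: level_between_def)
    moreover have "\<not> level_between (f k) (f j) (of_rat c)"
      using not_level_between[OF mono mono, of "of_rat c" k t j] c by simp
    ultimately show False
      using indiscernible_level_between[OF indisc M \<open>i < j\<close> \<open>j < k\<close>, of 1 0 c] by simp
  qed
qed

theorem mainTheorem18:
  fixes f :: "'i::linorder \<Rightarrow> ('l::{complete_linorder, dense_linorder, linorder_topology} \<Rightarrow> real)"
    and a :: "'i \<Rightarrow> real"
  assumes nontriv: "(bot::'l) < top"
    and inML: "\<forall>i. f i \<in> M_L"
    and indisc: "indiscernible f"
    and a_im: "a \<in> im f"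
  shows "mono a \<or> antimono a"
proof -
  obtain t where "a = (\<lambda>i. f i t)"
    using a_im by (auto simp: im_def)
  then show ?thesis
    using indiscernible_no_peak_no_valley[OF indisc inML]
    by (intro mono_or_antimono_if_no_peak_no_valley) blast
qed

end
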